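(* Let $\sigma>0$ and let $f,g,h$ be smooth, nowhere-vanishing real functions of $(y,s)$ on an open set $U\subset\mathbb{R}^2$ satisfying the bilinear equations $$\Big(\tfrac12 D_yD_s-1\Big)g\cdot g=-fh,\qquad \Big(\tfrac{1}{\sqrt{\sigma}}D_s+1\Big)f\cdot h=g^2,\qquad \Big(D_yD_s+\tfrac{2}{\sqrt{\sigma}}D_s+\sqrt{\sigma}D_y\Big)f\cdot h=0 .$$ Define the hodograph map $(y,s)\mapsto(x,t)$ by $$x=y-(\ln g)_s,\qquad t=s,$$ and the functions $$u=-(\ln g)_{ss},\qquad \rho=\frac{g^2}{fh}.$$ Then $\partial x/\partial y=fh/g^2=\rho^{-1}\neq 0$ and $\partial x/\partial s=u$; in particular the map is locally invertible, and on any subset where it is a diffeomorphism onto its image, $u$ and $\rho$, regarded as functions of $(x,t)$, satisfy the two-component Hunter–Saxton system with $\kappa=2$: $$\rho_t+(\rho u)_x=0,\qquad m_t+u\,m_x+2m\,u_x-\sigma\rho\rho_x=0,\quad m=2-u_{xx},$$ i.e. $u_{txx}-4u_x+2u_xu_{xx}+uu_{xxx}=-\sigma\rho\rho_x$ together with $\rho_t+(\rho u)_x=0$. *)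

theory Defs
  imports "HOL-Analysis.Analysis"
begin

text \<open>Functions of two real variables are represented as functions on real \<times> real.
  For the original variables the pair is (y,s); for the new variables it is (x,t).\<close>

definition pd1 :: "(real \<times> real \<Rightarrow> real) \<Rightarrow> real \<times> real \<Rightarrow> real" where
  "pd1 F = (\<lambda>(a, b). deriv (\<lambda>a'. F (a', b)) a)"

definition pd2 :: "(real \<times> real \<Rightarrow> real) \<Rightarrow> real \<times> real \<Rightarrow> real" where
  "pd2 F = (\<lambda>(a, b). deriv (\<lambda>b'. F (a, b')) b)"

coinductive smooth_on2 :: "(real \<times> real) set \<Rightarrow> (real \<times> real \<Rightarrow> real) \<Rightarrow> bool"
  for U where
  "\<lbrakk>\<forall>p\<in>U. F differentiable (at p); smooth_on2 U (pd1 F); smooth_on2 U (pd2 F)\<rbrakk>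
     \<Longrightarrow> smooth_on2 U F"

definition hirota_1 :: "(real \<times> real \<Rightarrow> real) \<Rightarrow> (real \<times> real \<Rightarrow> real) \<Rightarrow> real \<times> real \<Rightarrow> real" where
  "hirota_1 F G = (\<lambda>p. pd1 F p * G p - F p * pd1 G p)"

definition hirota_2 :: "(real \<times> real \<Rightarrow> real) \<Rightarrow> (real \<times> real \<Rightarrow> real) \<Rightarrow> real \<times> real \<Rightarrow> real" where
  "hirota_2 F G = (\<lambda>p. pd2 F p * G p - F p * pd2 G p)"

definition hirota_12 :: "(real \<times> real \<Rightarrow> real) \<Rightarrow> (real \<times> real \<Rightarrow> real) \<Rightarrow> real \<times> real \<Rightarrow> real" where
  "hirota_12 F G = (\<lambda>p. pd1 (pd2 F) p * G p - pd1 F p * pd2 G p - pd2 F p * pd1 G p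
                        + F p * pd1 (pd2 G) p)"

end

theory Submission
  imports Defs
begin

text \<open>In the hodograph variables \<open>\<partial>\<^sub>x = \<rho> \<partial>\<^sub>y\<close> and \<open>\<partial>\<^sub>t = \<partial>\<^sub>s - u \<rho> \<partial>\<^sub>y\<close>.
  The first bilinear equation says \<open>(ln g)\<^sub>y\<^sub>s = 1 - f h / g\<^sup>2 = 1 - 1/\<rho>\<close>; this gives
  \<open>x\<^sub>y = 1/\<rho>\<close> and, differentiated in \<open>s\<close>, the continuity equation \<open>\<rho>\<^sub>s + \<rho>\<^sup>2 u\<^sub>y = 0\<close>,
  which is also what makes \<open>\<partial>\<^sub>x\<close> and \<open>\<partial>\<^sub>t\<close> commute. The second equation says
  \<open>\<rho> = 1 + (ln (f/h))\<^sub>s / \<surd>\<sigma>\<close>; combined with the third it factors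
  \<open>m = 2 - u\<^sub>x\<^sub>x\<close> as \<open>\<rho>\<^sup>2 K\<close> with \<open>K = 2 + \<surd>\<sigma> (ln (f/h))\<^sub>y\<close>, and \<open>K\<^sub>s = \<sigma> \<rho>\<^sub>y\<close>
  by symmetry of second derivatives. The momentum equation is then a one-line computation
  in \<open>(y, s)\<close>, and the third form follows from it by commuting \<open>\<partial>\<^sub>x\<close> past \<open>\<partial>\<^sub>t\<close>.
  Local invertibility comes from \<open>x\<^sub>y \<noteq> 0\<close> and invariance of domain.\<close>

section \<open>Partial derivatives\<close>

lemma pd1_has_real_derivative:
  assumes "F differentiable (at p)"
  shows "((\<lambda>a. F (a, snd p)) has_real_derivative pd1 F p) (at (fst p))"
proof -
  have "(\<lambda>a. (a, snd p)) differentiable (at (fst p))"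
    by (intro derivative_intros)
  with assms have "(\<lambda>a. F (a, snd p)) differentiable (at (fst p))"
    using differentiable_chain_at[of "\<lambda>a. (a, snd p)" "fst p" F] by (simp add: o_def)
  then show ?thesis
    by (cases p) (simp add: pd1_def DERIV_deriv_iff_real_differentiable)
qed

lemma pd2_has_real_derivative:
  assumes "F differentiable (at p)"
  shows "((\<lambda>b. F (fst p, b)) has_real_derivative pd2 F p) (at (snd p))"
proof -
  have "(\<lambda>b. (fst p, b)) differentiable (at (snd p))"
    by (intro derivative_intros)
  with assms have "(\<lambda>b. F (fst p, b)) differentiable (at (snd p))"
    using differentiable_chain_at[of "\<lambda>b. (fst p, b)" "snd p" F] by (simp add: o_def)
  then show ?thesis
    by (cases p) (simp add: pd2_def DERIV_deriv_iff_real_differentiable)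
qed

lemma pd1_eqI:
  "((\<lambda>a. F (a, snd p)) has_real_derivative D) (at (fst p)) \<Longrightarrow> pd1 F p = D"
  unfolding pd1_def by (cases p) (simp add: DERIV_imp_deriv)

lemma pd2_eqI:
  "((\<lambda>b. F (fst p, b)) has_real_derivative D) (at (snd p)) \<Longrightarrow> pd2 F p = D"
  unfolding pd2_def by (cases p) (simp add: DERIV_imp_deriv)

lemma pd_has_derivative:
  assumes "(F has_derivative L) (at p)"
  shows pd1_has_derivative: "pd1 F p = L (1, 0)"
    and pd2_has_derivative: "pd2 F p = L (0, 1)"
proof -
  have lin: "linear L"
    using assms has_derivative_linear by blast
  have L1: "(\<lambda>c. L (c, 0)) = (*) (L (1, 0))"
  proof
    show "L (c, 0) = L (1, 0) * c" for c
      using linear_scale[OF lin, of c "(1, 0)"] by simp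
  qed
  have L2: "(\<lambda>d. L (0, d)) = (*) (L (0, 1))"
  proof
    show "L (0, d) = L (0, 1) * d" for d
      using linear_scale[OF lin, of d "(0, 1)"] by simp
  qed
  have "((\<lambda>a. (a, snd p)) has_derivative (\<lambda>c. (c, 0))) (at (fst p))"
    by (auto intro!: derivative_eq_intros)
  from has_derivative_compose[OF this, of F L] assms
  have "((\<lambda>a. F (a, snd p)) has_derivative (\<lambda>c. L (c, 0))) (at (fst p))"
    by simp
  then show "pd1 F p = L (1, 0)"
    by (intro pd1_eqI) (simp only: has_field_derivative_def L1)
  have "((\<lambda>b. (fst p, b)) has_derivative (\<lambda>d. (0, d))) (at (snd p))"
    by (auto intro!: derivative_eq_intros)
  from has_derivative_compose[OF this, of F L] assms
  have "((\<lambda>b. F (fst p, b)) has_derivative (\<lambda>d. L (0, d))) (at (snd p))"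
    by simp
  then show "pd2 F p = L (0, 1)"
    by (intro pd2_eqI) (simp only: has_field_derivative_def L2)
qed

lemma pd_cong_open:
  assumes "open S" "p \<in> S" "\<And>q. q \<in> S \<Longrightarrow> F q = G q"
  shows "pd1 F p = pd1 G p" and "pd2 F p = pd2 G p"
proof -
  have "open ((\<lambda>a. (a, snd p)) -` S)" "open ((\<lambda>b. (fst p, b)) -` S)"
    by (intro continuous_open_vimage assms(1) continuous_intros)+
  from eventually_nhds_in_open[OF this(1), of "fst p"] eventually_nhds_in_open[OF this(2), of "snd p"]
  have "eventually (\<lambda>a. (a, snd p) \<in> S) (nhds (fst p))"
    and "eventually (\<lambda>b. (fst p, b) \<in> S) (nhds (snd p))"
    using assms(2) by simp_all
  then have "eventually (\<lambda>a. F (a, snd p) = G (a, snd p)) (nhds (fst p))"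
    and "eventually (\<lambda>b. F (fst p, b) = G (fst p, b)) (nhds (snd p))"
    by (auto elim!: eventually_mono simp: assms(3))
  then show "pd1 F p = pd1 G p" "pd2 F p = pd2 G p"
    unfolding pd1_def pd2_def by (auto split: prod.split intro: deriv_cong_ev)
qed

lemma DERIV_ln_abs:
  assumes "x \<noteq> (0::real)"
  shows "((\<lambda>x. ln \<bar>x\<bar>) has_real_derivative inverse x) (at x)"
proof (cases "x > 0")
  case True
  have "eventually (\<lambda>z. ln z = ln \<bar>z\<bar>) (nhds x)"
    using True eventually_nhds_in_open[of "{0<..}" x] eventually_mono by fastforce
  then have "(ln has_real_derivative inverse x) (at x) \<longleftrightarrow> ?thesis"
    by (intro DERIV_cong_ev) simp_all
  with DERIV_ln[OF True] show ?thesis by simp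
next
  case False
  with assms have "x < 0" by simp
  have "((\<lambda>z. ln (- z)) has_real_derivative inverse x) (at x)"
    using \<open>x < 0\<close> by (auto intro!: derivative_eq_intros simp: divide_simps)
  moreover have "eventually (\<lambda>z. ln (- z) = ln \<bar>z\<bar>) (nhds x)"
    using \<open>x < 0\<close> eventually_nhds_in_open[of "{..<0}" x] eventually_mono by fastforce
  then have "((\<lambda>z. ln (- z)) has_real_derivative inverse x) (at x) \<longleftrightarrow> ?thesis"
    by (intro DERIV_cong_ev) simp_all
  ultimately show ?thesis by simp
qed

lemma pd_const [simp]: "pd1 (\<lambda>q. c) p = 0" "pd2 (\<lambda>q. c) p = 0"
  by (auto intro: pd1_eqI pd2_eqI)

lemma pd_fst [simp]: "pd1 fst p = 1" "pd2 fst p = 0"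
  by (auto intro!: pd1_eqI pd2_eqI derivative_eq_intros)

lemma pd_snd [simp]: "pd1 snd p = 0" "pd2 snd p = 1"
  by (auto intro!: pd1_eqI pd2_eqI derivative_eq_intros)

context
  fixes F G :: "real \<times> real \<Rightarrow> real" and p :: "real \<times> real"
  assumes F: "F differentiable (at p)"
begin

lemma pd_minus: "pd1 (\<lambda>q. - F q) p = - pd1 F p" "pd2 (\<lambda>q. - F q) p = - pd2 F p"
  by (intro pd1_eqI pd2_eqI DERIV_minus pd1_has_real_derivative pd2_has_real_derivative F)+

lemma pd_power:
  "pd1 (\<lambda>q. F q ^ n) p = of_nat n * F p ^ (n - 1) * pd1 F p"
  "pd2 (\<lambda>q. F q ^ n) p = of_nat n * F p ^ (n - 1) * pd2 F p"
  using DERIV_power[OF pd1_has_real_derivative[OF F], of n]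
    DERIV_power[OF pd2_has_real_derivative[OF F], of n]
  by (auto intro!: pd1_eqI pd2_eqI simp: algebra_simps)

lemma pd_inverse:
  assumes "F p \<noteq> 0"
  shows "pd1 (\<lambda>q. inverse (F q)) p = - (inverse (F p) * pd1 F p * inverse (F p))"
    and "pd2 (\<lambda>q. inverse (F q)) p = - (inverse (F p) * pd2 F p * inverse (F p))"
  using DERIV_inverse'[OF pd1_has_real_derivative[OF F]]
    DERIV_inverse'[OF pd2_has_real_derivative[OF F]] assms
  by (auto intro!: pd1_eqI pd2_eqI)

lemma pd_ln_abs:
  assumes "F p \<noteq> 0"
  shows "pd2 (\<lambda>q. ln \<bar>F q\<bar>) p = pd2 F p / F p"
proof -
  have "F (fst p, snd p) \<noteq> 0"
    using assms by simp
  from DERIV_chain2[where g = "\<lambda>b. F (fst p, b)" and x = "snd p", OF DERIV_ln_abs[OF this]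
      pd2_has_real_derivative[OF F]]
  show ?thesis
    by (intro pd2_eqI) (simp add: field_simps)
qed

context
  assumes G: "G differentiable (at p)"
begin

lemma pd_add:
  "pd1 (\<lambda>q. F q + G q) p = pd1 F p + pd1 G p"
  "pd2 (\<lambda>q. F q + G q) p = pd2 F p + pd2 G p"
  by (intro pd1_eqI pd2_eqI DERIV_add pd1_has_real_derivative pd2_has_real_derivative F G)+

lemma pd_diff:
  "pd1 (\<lambda>q. F q - G q) p = pd1 F p - pd1 G p"
  "pd2 (\<lambda>q. F q - G q) p = pd2 F p - pd2 G p"
  by (intro pd1_eqI pd2_eqI DERIV_diff pd1_has_real_derivative pd2_has_real_derivative F G)+

lemma pd_mult:
  "pd1 (\<lambda>q. F q * G q) p = pd1 F p * G p + F p * pd1 G p"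
  "pd2 (\<lambda>q. F q * G q) p = pd2 F p * G p + F p * pd2 G p"
  using DERIV_mult[OF pd1_has_real_derivative[OF F] pd1_has_real_derivative[OF G]]
    DERIV_mult[OF pd2_has_real_derivative[OF F] pd2_has_real_derivative[OF G]]
  by (auto intro!: pd1_eqI pd2_eqI simp: algebra_simps)

lemma pd_divide:
  assumes "G p \<noteq> 0"
  shows "pd1 (\<lambda>q. F q / G q) p = (pd1 F p * G p - F p * pd1 G p) / (G p * G p)"
    and "pd2 (\<lambda>q. F q / G q) p = (pd2 F p * G p - F p * pd2 G p) / (G p * G p)"
  using DERIV_divide[OF pd1_has_real_derivative[OF F] pd1_has_real_derivative[OF G]]
    DERIV_divide[OF pd2_has_real_derivative[OF F] pd2_has_real_derivative[OF G]] assms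
  by (auto intro!: pd1_eqI pd2_eqI simp: algebra_simps)

end

end

section \<open>Smooth functions\<close>

lemma smooth_on2_differentiable: "smooth_on2 U F \<Longrightarrow> p \<in> U \<Longrightarrow> F differentiable (at p)"
  by (erule smooth_on2.cases) auto

lemma smooth_on2_pd1: "smooth_on2 U F \<Longrightarrow> smooth_on2 U (pd1 F)"
  by (erule smooth_on2.cases) auto

lemma smooth_on2_pd2: "smooth_on2 U F \<Longrightarrow> smooth_on2 U (pd2 F)"
  by (erule smooth_on2.cases) auto

text \<open>Closure of \<open>smooth_on2\<close> under the field operations is proved coinductively: the
  partial derivatives of a member of \<open>smooth_alg U\<close> agree on \<open>U\<close> with members again.\<close>

inductive_set smooth_alg :: "(real \<times> real) set \<Rightarrow> (real \<times> real \<Rightarrow> real) set" for U where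
  smooth: "smooth_on2 U F \<Longrightarrow> F \<in> smooth_alg U"
| const: "(\<lambda>q. c) \<in> smooth_alg U"
| fst: "fst \<in> smooth_alg U"
| add: "F \<in> smooth_alg U \<Longrightarrow> G \<in> smooth_alg U \<Longrightarrow> (\<lambda>q. F q + G q) \<in> smooth_alg U"
| mult: "F \<in> smooth_alg U \<Longrightarrow> G \<in> smooth_alg U \<Longrightarrow> (\<lambda>q. F q * G q) \<in> smooth_alg U"
| inverse: "F \<in> smooth_alg U \<Longrightarrow> (\<And>p. p \<in> U \<Longrightarrow> F p \<noteq> 0)
    \<Longrightarrow> (\<lambda>q. inverse (F q)) \<in> smooth_alg U"

lemma smooth_alg_differentiable:
  "F \<in> smooth_alg U \<Longrightarrow> p \<in> U \<Longrightarrow> F differentiable (at p)"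
  by (induction rule: smooth_alg.induct)
    (auto intro: derivative_intros bounded_linear_imp_differentiable bounded_linear_fst
      smooth_on2_differentiable)

lemma smooth_alg_pd:
  assumes "F \<in> smooth_alg U" and D: "D = pd1 \<or> D = pd2"
  shows "\<exists>G\<in>smooth_alg U. \<forall>p\<in>U. D F p = G p"
  using assms(1)
proof (induction rule: smooth_alg.induct)
  case (smooth F)
  then show ?case
    using D smooth_on2_pd1 smooth_on2_pd2 smooth_alg.smooth by blast
next
  case (const c)
  show ?case
    using D smooth_alg.const[of 0] by auto
next
  case fst
  show ?case
    using D smooth_alg.const[of 0] smooth_alg.const[of 1] by auto
next
  case (add F G)
  then obtain F' G' where F': "F' \<in> smooth_alg U" "\<forall>p\<in>U. D F p = F' p"
    and G': "G' \<in> smooth_alg U" "\<forall>p\<in>U. D G p = G' p"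
    by blast
  have "D (\<lambda>q. F q + G q) p = F' p + G' p" if "p \<in> U" for p
    using D F'(2) G'(2) that pd_add[OF smooth_alg_differentiable[OF add.hyps(1) that]
        smooth_alg_differentiable[OF add.hyps(2) that]] by auto
  with F'(1) G'(1) show ?case
    by (intro bexI[of _ "\<lambda>q. F' q + G' q"] smooth_alg.add) auto
next
  case (mult F G)
  then obtain F' G' where F': "F' \<in> smooth_alg U" "\<forall>p\<in>U. D F p = F' p"
    and G': "G' \<in> smooth_alg U" "\<forall>p\<in>U. D G p = G' p"
    by blast
  have "D (\<lambda>q. F q * G q) p = F' p * G p + F p * G' p" if "p \<in> U" for p
    using D F'(2) G'(2) that pd_mult[OF smooth_alg_differentiable[OF mult.hyps(1) that]
        smooth_alg_differentiable[OF mult.hyps(2) that]] by auto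
  with F'(1) G'(1) mult.hyps(1,2) show ?case
    by (intro bexI[of _ "\<lambda>q. F' q * G q + F q * G' q"] smooth_alg.add smooth_alg.mult) auto
next
  case (inverse F)
  then obtain F' where F': "F' \<in> smooth_alg U" "\<forall>p\<in>U. D F p = F' p"
    by blast
  have inv: "(\<lambda>q. inverse (F q)) \<in> smooth_alg U"
    using inverse.hyps by (rule smooth_alg.inverse)
  have "D (\<lambda>q. inverse (F q)) p = (- 1) * F' p * (inverse (F p) * inverse (F p))" if "p \<in> U" for p
    using D F'(2) that inverse.hyps(2)[OF that]
      pd_inverse[OF smooth_alg_differentiable[OF inverse.hyps(1) that] inverse.hyps(2)[OF that]]
    by auto
  with F'(1) inv show ?case
    by (intro bexI[of _ "\<lambda>q. (- 1) * F' q * (inverse (F q) * inverse (F q))"]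
        smooth_alg.mult smooth_alg.const) auto
qed

lemma smooth_on2_smooth_alg:
  assumes "open U" "G \<in> smooth_alg U" "\<And>p. p \<in> U \<Longrightarrow> F p = G p"
  shows "smooth_on2 U F"
proof -
  let ?X = "\<lambda>F. \<exists>G\<in>smooth_alg U. \<forall>p\<in>U. F p = G p"
  from assms(2,3) have "?X F" by blast
  then show ?thesis
  proof (rule smooth_on2.coinduct)
    fix F
    assume "?X F"
    then obtain G where G: "G \<in> smooth_alg U" "\<forall>p\<in>U. F p = G p"
      by blast
    have diff: "F differentiable (at p)" if p: "p \<in> U" for p
    proof -
      obtain L where "(G has_derivative L) (at p)"
        using smooth_alg_differentiable[OF G(1) p] unfolding differentiable_def by blast
      then have "(F has_derivative L) (at p)"
        by (rule has_derivative_transform_within_open[OF _ assms(1) p]) (use G(2) in auto)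
      then show ?thesis
        unfolding differentiable_def by blast
    qed
    have X: "?X (D F)" if D: "D = pd1 \<or> D = pd2" for D
    proof -
      obtain G' where "G' \<in> smooth_alg U" "\<forall>p\<in>U. D G p = G' p"
        using smooth_alg_pd[OF G(1) D] by blast
      moreover have "D F p = D G p" if "p \<in> U" for p
        using D pd_cong_open[OF assms(1) that] G(2) by blast
      ultimately show ?thesis by auto
    qed
    show "\<exists>F'. F = F' \<and> (\<forall>p\<in>U. F' differentiable (at p))
        \<and> (?X (pd1 F') \<or> smooth_on2 U (pd1 F')) \<and> (?X (pd2 F') \<or> smooth_on2 U (pd2 F'))"
      using diff X[of pd1] X[of pd2] by (intro exI[of _ F]) blast
  qed
qed

text \<open>The second difference of \<open>F\<close> over the square, computed by the mean value theorem
  in either order, is \<open>t\<^sup>2\<close> times a value of either mixed partial.\<close>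

lemma mixed_partials_meet:
  fixes a b t :: real
  defines "Q \<equiv> {a..a + t} \<times> {b..b + t}"
  assumes t: "t > 0"
    and diff: "\<And>q. q \<in> Q \<Longrightarrow>
      F differentiable (at q) \<and> pd1 F differentiable (at q) \<and> pd2 F differentiable (at q)"
  shows "\<exists>q1\<in>Q. \<exists>q2\<in>Q. pd2 (pd1 F) q1 = pd1 (pd2 F) q2"
proof -
  have dy: "((\<lambda>y. H (y, s)) has_real_derivative pd1 H (y, s)) (at y)"
    and ds: "((\<lambda>s. H (y, s)) has_real_derivative pd2 H (y, s)) (at s)"
    if "(y, s) \<in> Q" "H = F \<or> H = pd1 F \<or> H = pd2 F" for H y s
    using pd1_has_real_derivative[of H "(y, s)"] pd2_has_real_derivative[of H "(y, s)"]
      diff[OF that(1)] that(2) by auto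
  have in_Q: "(y, s) \<in> Q" if "a \<le> y" "y \<le> a + t" "b \<le> s" "s \<le> b + t" for y s
    using that unfolding Q_def by simp
  have "\<exists>y1>a. y1 < a + t \<and> (F (a + t, b + t) - F (a + t, b)) - (F (a, b + t) - F (a, b))
      = (a + t - a) * (pd1 F (y1, b + t) - pd1 F (y1, b))"
    using t by (intro MVT2) (auto intro!: DERIV_diff dy in_Q)
  then obtain y1 where y1: "a < y1" "y1 < a + t"
    and \<Delta>1: "(F (a + t, b + t) - F (a + t, b)) - (F (a, b + t) - F (a, b))
      = t * (pd1 F (y1, b + t) - pd1 F (y1, b))"
    by auto
  have "\<exists>s1>b. s1 < b + t \<and> pd1 F (y1, b + t) - pd1 F (y1, b) = (b + t - b) * pd2 (pd1 F) (y1, s1)"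
    using t y1 by (intro MVT2) (auto intro!: ds in_Q)
  then obtain s1 where s1: "b < s1" "s1 < b + t"
    and "pd1 F (y1, b + t) - pd1 F (y1, b) = t * pd2 (pd1 F) (y1, s1)"
    by auto
  have "\<exists>s2>b. s2 < b + t \<and> (F (a + t, b + t) - F (a, b + t)) - (F (a + t, b) - F (a, b))
      = (b + t - b) * (pd2 F (a + t, s2) - pd2 F (a, s2))"
    using t by (intro MVT2) (auto intro!: DERIV_diff ds in_Q)
  then obtain s2 where s2: "b < s2" "s2 < b + t"
    and \<Delta>2: "(F (a + t, b + t) - F (a, b + t)) - (F (a + t, b) - F (a, b))
      = t * (pd2 F (a + t, s2) - pd2 F (a, s2))"
    by auto
  have "\<exists>y2>a. y2 < a + t \<and> pd2 F (a + t, s2) - pd2 F (a, s2) = (a + t - a) * pd1 (pd2 F) (y2, s2)"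
    using t s2 by (intro MVT2) (auto intro!: dy in_Q)
  then obtain y2 where y2: "a < y2" "y2 < a + t"
    and "pd2 F (a + t, s2) - pd2 F (a, s2) = t * pd1 (pd2 F) (y2, s2)"
    by auto
  moreover note \<open>pd1 F (y1, b + t) - pd1 F (y1, b) = t * pd2 (pd1 F) (y1, s1)\<close>
  ultimately have "t * (t * pd2 (pd1 F) (y1, s1)) = t * (t * pd1 (pd2 F) (y2, s2))"
    using \<Delta>1 \<Delta>2 by (simp add: algebra_simps)
  then have "pd2 (pd1 F) (y1, s1) = pd1 (pd2 F) (y2, s2)"
    using t by simp
  moreover have "(y1, s1) \<in> Q" "(y2, s2) \<in> Q"
    using y1 s1 y2 s2 by (auto intro: in_Q)
  ultimately show ?thesis by blast
qed

lemma dist_square_le: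
  fixes a b t y s :: real
  assumes "(y, s) \<in> {a..a + t} \<times> {b..b + t}"
  shows "dist (y, s) (a, b) \<le> 2 * t"
proof -
  have "dist (y, s) (a, b) \<le> \<bar>y - a\<bar> + \<bar>s - b\<bar>"
    using sqrt_sum_squares_le_sum_abs[of "y - a" "s - b"]
    by (simp add: dist_Pair_Pair dist_real_def power2_eq_square)
  with assms show ?thesis by auto
qed

theorem pd_symmetric:
  assumes U: "open U" and p: "p \<in> U"
    and diff: "\<And>q. q \<in> U \<Longrightarrow>
      F differentiable (at q) \<and> pd1 F differentiable (at q) \<and> pd2 F differentiable (at q)"
    and cont: "isCont (pd2 (pd1 F)) p" "isCont (pd1 (pd2 F)) p"
  shows "pd2 (pd1 F) p = pd1 (pd2 F) p"
proof (rule ccontr)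
  let ?D1 = "pd2 (pd1 F)" and ?D2 = "pd1 (pd2 F)"
  assume "?D1 p \<noteq> ?D2 p"
  define e where "e = \<bar>?D1 p - ?D2 p\<bar> / 2"
  have e: "e > 0"
    using \<open>?D1 p \<noteq> ?D2 p\<close> by (simp add: e_def)
  obtain d1 where d1: "d1 > 0" "\<And>q. dist q p < d1 \<Longrightarrow> dist (?D1 q) (?D1 p) < e"
    using cont(1) e unfolding continuous_at_eps_delta by blast
  obtain d2 where d2: "d2 > 0" "\<And>q. dist q p < d2 \<Longrightarrow> dist (?D2 q) (?D2 p) < e"
    using cont(2) e unfolding continuous_at_eps_delta by blast
  obtain r where r: "r > 0" "ball p r \<subseteq> U"
    using U p open_contains_ball by blast
  define t where "t = min (min d1 d2) r / 4"
  have t: "t > 0" "2 * t < d1" "2 * t < d2" "2 * t < r"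
    using d1 d2 r by (auto simp: t_def)
  define Q where "Q = {fst p..fst p + t} \<times> {snd p..snd p + t}"
  have near: "dist q p \<le> 2 * t" if "q \<in> Q" for q
    using dist_square_le[of "fst q" "snd q" "fst p" t "snd p"] that by (simp add: Q_def)
  have "Q \<subseteq> U"
    using near t r by (force simp: dist_commute)
  then have "\<exists>q1\<in>Q. \<exists>q2\<in>Q. ?D1 q1 = ?D2 q2"
    unfolding Q_def by (intro mixed_partials_meet t(1) diff) (auto simp: Q_def)
  then obtain q1 q2 where "q1 \<in> Q" "q2 \<in> Q" "?D1 q1 = ?D2 q2"
    by blast
  moreover have "dist (?D1 q1) (?D1 p) < e"
    by (intro d1(2)) (use near[OF \<open>q1 \<in> Q\<close>] t(2) in linarith)
  moreover have "dist (?D2 q2) (?D2 p) < e"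
    by (intro d2(2)) (use near[OF \<open>q2 \<in> Q\<close>] t(3) in linarith)
  ultimately have "\<bar>?D1 p - ?D2 p\<bar> < 2 * e"
    by (simp add: dist_real_def)
  then show False
    by (simp add: e_def)
qed

locale smooth_domain =
  fixes U :: "(real \<times> real) set"
  assumes open_domain: "open U"
begin

lemma smooth_cong: "smooth_on2 U F \<Longrightarrow> (\<And>p. p \<in> U \<Longrightarrow> G p = F p) \<Longrightarrow> smooth_on2 U G"
  by (rule smooth_on2_smooth_alg[OF open_domain smooth_alg.smooth])

lemma smooth_const [simp]: "smooth_on2 U (\<lambda>q. c)"
  by (rule smooth_on2_smooth_alg[OF open_domain smooth_alg.const[of c]]) (rule refl)

lemma smooth_fst [simp]: "smooth_on2 U fst"
  by (rule smooth_on2_smooth_alg[OF open_domain smooth_alg.fst]) (rule refl)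

lemma smooth_add [simp]:
  "smooth_on2 U F \<Longrightarrow> smooth_on2 U G \<Longrightarrow> smooth_on2 U (\<lambda>q. F q + G q)"
  by (rule smooth_on2_smooth_alg[OF open_domain smooth_alg.add[OF smooth_alg.smooth smooth_alg.smooth]])
    (assumption | rule refl)+

lemma smooth_mult [simp]:
  "smooth_on2 U F \<Longrightarrow> smooth_on2 U G \<Longrightarrow> smooth_on2 U (\<lambda>q. F q * G q)"
  by (rule smooth_on2_smooth_alg[OF open_domain smooth_alg.mult[OF smooth_alg.smooth smooth_alg.smooth]])
    (assumption | rule refl)+

lemma smooth_inverse [simp]:
  "smooth_on2 U F \<Longrightarrow> (\<And>p. p \<in> U \<Longrightarrow> F p \<noteq> 0) \<Longrightarrow> smooth_on2 U (\<lambda>q. inverse (F q))"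
  by (rule smooth_on2_smooth_alg[OF open_domain smooth_alg.inverse[OF smooth_alg.smooth]])
    (assumption | rule refl)+

lemma smooth_minus [simp]: "smooth_on2 U F \<Longrightarrow> smooth_on2 U (\<lambda>q. - F q)"
  using smooth_mult[of "\<lambda>q. - 1" F] by simp

lemma smooth_diff [simp]:
  "smooth_on2 U F \<Longrightarrow> smooth_on2 U G \<Longrightarrow> smooth_on2 U (\<lambda>q. F q - G q)"
  using smooth_add[of F "\<lambda>q. - G q"] by simp

lemma smooth_divide [simp]:
  "smooth_on2 U F \<Longrightarrow> smooth_on2 U G \<Longrightarrow> (\<And>p. p \<in> U \<Longrightarrow> G p \<noteq> 0)
    \<Longrightarrow> smooth_on2 U (\<lambda>q. F q / G q)"
  using smooth_mult[of F "\<lambda>q. inverse (G q)"] by (simp add: divide_inverse)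

lemma smooth_power [simp]: "smooth_on2 U F \<Longrightarrow> smooth_on2 U (\<lambda>q. F q ^ n)"
  by (induction n) simp_all

lemma smooth_pd [simp]: "smooth_on2 U F \<Longrightarrow> smooth_on2 U (pd1 F)" "smooth_on2 U F \<Longrightarrow> smooth_on2 U (pd2 F)"
  by (simp_all add: smooth_on2_pd1 smooth_on2_pd2)

lemma smooth_differentiable [simp]: "smooth_on2 U F \<Longrightarrow> p \<in> U \<Longrightarrow> F differentiable (at p)"
  by (rule smooth_on2_differentiable)

declare pd_minus [simp] pd_power [simp] pd_add [simp] pd_diff [simp] pd_mult [simp] pd_divide [simp]

lemma pd_cong:
  assumes "p \<in> U" "\<And>q. q \<in> U \<Longrightarrow> F q = G q"
  shows pd1_cong: "pd1 F p = pd1 G p" and pd2_cong: "pd2 F p = pd2 G p"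
  using pd_cong_open[OF open_domain assms] by simp_all

lemma smooth_pd_commute: "smooth_on2 U F \<Longrightarrow> p \<in> U \<Longrightarrow> pd2 (pd1 F) p = pd1 (pd2 F) p"
  by (intro pd_symmetric[OF open_domain] differentiable_imp_continuous_within conjI) auto

end

section \<open>Change of variables\<close>

lemma linear_real_pair:
  fixes L :: "real \<times> real \<Rightarrow> real"
  assumes "linear L"
  shows "L (c, d) = c * L (1, 0) + d * L (0, 1)"
proof -
  have "L (c, d) = L (c *\<^sub>R (1, 0) + d *\<^sub>R (0, 1))"
    by simp
  also have "\<dots> = c * L (1, 0) + d * L (0, 1)"
    by (simp only: linear_add[OF assms] linear_scale[OF assms] real_scaleR_def)
  finally show ?thesis .
qed

lemma pd_chain:
  assumes "A differentiable (at p)" "B differentiable (at p)" "H differentiable (at (A p, B p))"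
  shows "pd1 (\<lambda>q. H (A q, B q)) p = pd1 H (A p, B p) * pd1 A p + pd2 H (A p, B p) * pd1 B p"
    and "pd2 (\<lambda>q. H (A q, B q)) p = pd1 H (A p, B p) * pd2 A p + pd2 H (A p, B p) * pd2 B p"
proof -
  obtain A' B' H' where A': "(A has_derivative A') (at p)" and B': "(B has_derivative B') (at p)"
    and H': "(H has_derivative H') (at (A p, B p))"
    using assms unfolding differentiable_def by blast
  have comp: "((\<lambda>q. H (A q, B q)) has_derivative (\<lambda>v. H' (A' v, B' v))) (at p)"
    using has_derivative_compose[OF has_derivative_Pair[OF A' B'] H'] .
  have lin: "linear H'"
    using H' has_derivative_linear by blast
  have "pd1 (\<lambda>q. H (A q, B q)) p = H' (A' (1, 0), B' (1, 0))"
    by (rule pd1_has_derivative[OF comp])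
  also have "\<dots> = A' (1, 0) * H' (1, 0) + B' (1, 0) * H' (0, 1)"
    by (rule linear_real_pair[OF lin])
  finally show "pd1 (\<lambda>q. H (A q, B q)) p = pd1 H (A p, B p) * pd1 A p + pd2 H (A p, B p) * pd1 B p"
    by (simp add: pd_has_derivative[OF A'] pd_has_derivative[OF B'] pd_has_derivative[OF H'])
  have "pd2 (\<lambda>q. H (A q, B q)) p = H' (A' (0, 1), B' (0, 1))"
    by (rule pd2_has_derivative[OF comp])
  also have "\<dots> = A' (0, 1) * H' (1, 0) + B' (0, 1) * H' (0, 1)"
    by (rule linear_real_pair[OF lin])
  finally show "pd2 (\<lambda>q. H (A q, B q)) p = pd1 H (A p, B p) * pd2 A p + pd2 H (A p, B p) * pd2 B p"
    by (simp add: pd_has_derivative[OF A'] pd_has_derivative[OF B'] pd_has_derivative[OF H'])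
qed

lemma pd_inverse_change_of_variables:
  assumes V: "open V" "p \<in> V" and X: "X differentiable (at p)"
    and inv: "\<And>p'. p' \<in> V \<Longrightarrow> \<Psi> (X p', snd p') = p'"
    and \<Psi>: "\<Psi> differentiable (at (X p, snd p))" and G: "G differentiable (at p)"
  shows "pd1 G p = pd1 (\<lambda>q. G (\<Psi> q)) (X p, snd p) * pd1 X p"
    and "pd2 G p = pd1 (\<lambda>q. G (\<Psi> q)) (X p, snd p) * pd2 X p + pd2 (\<lambda>q. G (\<Psi> q)) (X p, snd p)"
proof -
  have "(G \<circ> \<Psi>) differentiable (at (X p, snd p))"
    using differentiable_chain_at[OF \<Psi>] G inv[OF V(2)] by simp
  then have H: "(\<lambda>q. G (\<Psi> q)) differentiable (at (X p, snd p))"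
    by (simp add: o_def)
  have snd: "snd differentiable (at p)"
    by (simp add: bounded_linear_imp_differentiable bounded_linear_snd)
  have "G p' = G (\<Psi> (X p', snd p'))" if "p' \<in> V" for p'
    using inv[OF that] by simp
  note cong = pd_cong_open[OF V this]
  from cong pd_chain[OF X snd H] show "pd1 G p = pd1 (\<lambda>q. G (\<Psi> q)) (X p, snd p) * pd1 X p"
    and "pd2 G p = pd1 (\<lambda>q. G (\<Psi> q)) (X p, snd p) * pd2 X p + pd2 (\<lambda>q. G (\<Psi> q)) (X p, snd p)"
    by simp_all
qed

lemma horizontal_segment_in_convex:
  fixes a b :: "real \<times> real"
  assumes "convex S" "a \<in> S" "b \<in> S" "snd a = snd b" "fst a \<le> y" "y \<le> fst b"
  shows "(y, snd a) \<in> S"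
proof (cases "fst a = fst b")
  case True
  with assms(5,6) have "y = fst a"
    by linarith
  with assms(2) show ?thesis by simp
next
  case False
  define u where "u = (y - fst a) / (fst b - fst a)"
  have "0 \<le> u" "u \<le> 1"
    using assms(5,6) False by (auto simp: u_def divide_simps)
  with assms have "(1 - u) *\<^sub>R a + u *\<^sub>R b \<in> S"
    by (intro convexD_alt)
  moreover have "u * (fst b - fst a) = y - fst a"
    using False by (simp add: u_def)
  then have "(1 - u) *\<^sub>R a + u *\<^sub>R b = (y, snd a)"
    using assms(4) by (simp add: prod_eq_iff algebra_simps)
  ultimately show ?thesis by simp
qed

lemma shear_locally_injective_open:
  assumes U: "open U" "p \<in> U" and X: "\<And>q. q \<in> U \<Longrightarrow> X differentiable (at q)"
    and cont: "isCont (pd1 X) p" and nz: "pd1 X p \<noteq> 0"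
  shows "\<exists>V. p \<in> V \<and> open V \<and> V \<subseteq> U \<and> inj_on (\<lambda>q. (X q, snd q)) V
    \<and> open ((\<lambda>q. (X q, snd q)) ` V)"
proof -
  let ?\<Phi> = "\<lambda>q. (X q, snd q)"
  obtain d where d: "d > 0" "\<And>q. dist q p < d \<Longrightarrow> dist (pd1 X q) (pd1 X p) < \<bar>pd1 X p\<bar>"
    using cont nz unfolding continuous_at_eps_delta by (meson zero_less_abs_iff)
  obtain r0 where r0: "r0 > 0" "ball p r0 \<subseteq> U"
    using U open_contains_ball by blast
  define r where "r = min d r0"
  have B: "ball p r \<subseteq> U"
    using r0 by (auto simp: r_def)
  have nz_ball: "pd1 X q \<noteq> 0" if "q \<in> ball p r" for q
    using d(2)[of q] that by (auto simp: r_def dist_commute dist_real_def)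
  have dX: "((\<lambda>y. X (y, s)) has_real_derivative pd1 X (y, s)) (at y)" if "(y, s) \<in> U" for y s
    using pd1_has_real_derivative[of X "(y, s)"] X[OF that] by simp
  have no_collision: False
    if ab: "a \<in> ball p r" "b \<in> ball p r" "?\<Phi> a = ?\<Phi> b" and lt: "fst a < fst b" for a b
  proof -
    have seg: "(y, snd a) \<in> ball p r" if "fst a \<le> y" "y \<le> fst b" for y
      using horizontal_segment_in_convex[OF convex_ball ab(1,2)] that ab(3) by simp
    have "\<exists>z>fst a. z < fst b \<and> X (fst b, snd a) - X (fst a, snd a) = (fst b - fst a) * pd1 X (z, snd a)"
      using lt seg B by (intro MVT2 dX) auto
    moreover have "X (fst b, snd a) = X (fst a, snd a)"
      by (metis ab(3) prod.collapse prod.inject)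
    ultimately obtain z where "fst a < z" "z < fst b" "pd1 X (z, snd a) = 0"
      using lt by auto
    then show False
      using nz_ball seg by force
  qed
  have inj: "inj_on ?\<Phi> (ball p r)"
  proof (rule inj_onI)
    fix a b
    assume "a \<in> ball p r" "b \<in> ball p r" "?\<Phi> a = ?\<Phi> b"
    then show "a = b"
      using no_collision[of a b] no_collision[of b a] by (cases "fst a" "fst b" rule: linorder_cases)
        (auto simp: prod_eq_iff)
  qed
  have "continuous_on (ball p r) ?\<Phi>"
    using B X by (intro continuous_at_imp_continuous_on ballI continuous_intros
        differentiable_imp_continuous_within) auto
  then have "open (?\<Phi> ` ball p r)"
    using invariance_of_domain inj by blast
  with inj B show ?thesis
    using r0(1) d(1) by (intro exI[of _ "ball p r"]) (auto simp: r_def)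
qed

section \<open>The bilinear system in hodograph variables\<close>

text \<open>The second and third bilinear equations at a point, with \<open>f1, f2, f12\<close> standing for
  \<open>f\<^sub>y, f\<^sub>s, f\<^sub>y\<^sub>s\<close> (likewise for \<open>h\<close>) and \<open>a\<close> for \<open>\<surd>\<sigma>\<close>. The conclusion is the
  factorisation \<open>2 - u\<^sub>x\<^sub>x = \<rho>\<^sup>2 K\<close>.\<close>

lemma momentum_identity:
  fixes a f g h rho f1 f2 f12 h1 h2 h12 :: real
  assumes nz: "f \<noteq> 0" "g \<noteq> 0" "h \<noteq> 0" "a > 0"
    and e2: "(1/a) * (f2 * h - f * h2) + f * h = g\<^sup>2"
    and e3: "(f12 * h - f1 * h2 - f2 * h1 + f * h12) + (2/a) * (f2 * h - f * h2)
      + a * (f1 * h - f * h1) = 0"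
    and rho: "rho = g\<^sup>2 / (f * h)"
  shows "2 + rho * (2 * (1 - f * h / g\<^sup>2) - (f12 * f - f2 * f1) / (f * f) - (h12 * h - h2 * h1) / (h * h))
    = rho\<^sup>2 * (2 + a * (f1 / f - h1 / h))"
proof -
  have W: "f2 / f - h2 / h = a * (rho - 1)"
    using e2 nz rho by (simp add: field_simps)
  have s3: "f12 * h + f * h12 = f1 * h2 + f2 * h1 - (2/a) * (f2 * h - f * h2) - a * (f1 * h - f * h1)"
    using e3 by linarith
  have "(f12 * f - f2 * f1) / (f * f) + (h12 * h - h2 * h1) / (h * h)
      = (f12 * h + f * h12) / (f * h) - f1 * f2 / (f * f) - h1 * h2 / (h * h)"
    using nz by (simp add: field_simps)
  also have "\<dots> = - (f1 / f - h1 / h) * (f2 / f - h2 / h) - (2/a) * (f2 / f - h2 / h) - a * (f1 / f - h1 / h)"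
    unfolding s3 using nz by (simp add: field_simps)
  also have "\<dots> = - (f1 / f - h1 / h) * (a * (rho - 1)) - 2 * (rho - 1) - a * (f1 / f - h1 / h)"
    using nz by (simp add: W)
  finally have X: "(f12 * f - f2 * f1) / (f * f) + (h12 * h - h2 * h1) / (h * h)
      = - (f1 / f - h1 / h) * (a * (rho - 1)) - 2 * (rho - 1) - a * (f1 / f - h1 / h)" .
  have fh: "f * h / g\<^sup>2 = 1 / rho" and "rho \<noteq> 0"
    using rho nz by simp_all
  have "2 + rho * (2 * (1 - f * h / g\<^sup>2) - (f12 * f - f2 * f1) / (f * f) - (h12 * h - h2 * h1) / (h * h))
      = 2 + rho * (2 * (1 - 1 / rho) - ((f12 * f - f2 * f1) / (f * f) + (h12 * h - h2 * h1) / (h * h)))"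
    unfolding fh by simp
  also have "\<dots> = rho\<^sup>2 * (2 + a * (f1 / f - h1 / h))"
    unfolding X using \<open>rho \<noteq> 0\<close> nz by (simp add: field_simps power2_eq_square)
  finally show ?thesis .
qed

locale HS_bilinear = smooth_domain U for U +
  fixes \<sigma> :: real and f g h :: "real \<times> real \<Rightarrow> real"
  assumes sigma_pos: "\<sigma> > 0"
    and smooth_f [simp]: "smooth_on2 U f" and smooth_g [simp]: "smooth_on2 U g"
    and smooth_h [simp]: "smooth_on2 U h"
    and nonzero: "\<forall>p\<in>U. f p \<noteq> 0 \<and> g p \<noteq> 0 \<and> h p \<noteq> 0"
    and eq1: "\<forall>p\<in>U. (1/2) * hirota_12 g g p - g p * g p = - (f p * h p)"
    and eq2: "\<forall>p\<in>U. (1 / sqrt \<sigma>) * hirota_2 f h p + f p * h p = (g p)\<^sup>2"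
    and eq3: "\<forall>p\<in>U. hirota_12 f h p + (2 / sqrt \<sigma>) * hirota_2 f h p + sqrt \<sigma> * hirota_1 f h p = 0"
begin

lemma f_nonzero [simp]: "p \<in> U \<Longrightarrow> f p \<noteq> 0"
  and g_nonzero [simp]: "p \<in> U \<Longrightarrow> g p \<noteq> 0"
  and h_nonzero [simp]: "p \<in> U \<Longrightarrow> h p \<noteq> 0"
  using nonzero by auto

text \<open>\<open>L\<close> is \<open>(ln g)\<^sub>s\<close>, so that \<open>x = y - L\<close> and \<open>u = - L\<^sub>s\<close>; the operators \<open>Dx\<close>
  and \<open>Dt\<close> are \<open>\<partial>\<^sub>x\<close> and \<open>\<partial>\<^sub>t\<close> written in the variables \<open>(y, s)\<close>.\<close>

definition "L = (\<lambda>q. pd2 g q / g q)"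
definition "u = (\<lambda>q. - pd2 L q)"
definition "rho = (\<lambda>q. (g q)\<^sup>2 / (f q * h q))"
definition "Dx G = (\<lambda>q. rho q * pd1 G q)"
definition "Dt G = (\<lambda>q. pd2 G q - u q * rho q * pd1 G q)"
definition "K = (\<lambda>q. 2 + sqrt \<sigma> * (pd1 f q / f q - pd1 h q / h q))"

lemma rho_nonzero [simp]: "p \<in> U \<Longrightarrow> rho p \<noteq> 0"
  by (simp add: rho_def)

lemma smooth_L [simp]: "smooth_on2 U L"
  and smooth_u [simp]: "smooth_on2 U u"
  and smooth_rho [simp]: "smooth_on2 U rho"
  and smooth_K [simp]: "smooth_on2 U K"
  by (simp_all add: L_def u_def rho_def K_def)

lemma smooth_Dx [simp]: "smooth_on2 U G \<Longrightarrow> smooth_on2 U (Dx G)"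
  and smooth_Dt [simp]: "smooth_on2 U G \<Longrightarrow> smooth_on2 U (Dt G)"
  by (simp_all add: Dx_def Dt_def)

lemma pd2_ln_g: "p \<in> U \<Longrightarrow> pd2 (\<lambda>q. ln \<bar>g q\<bar>) p = L p"
  by (simp add: L_def pd_ln_abs)

lemma pd1_L: "p \<in> U \<Longrightarrow> pd1 L p = 1 - f p * h p / (g p)\<^sup>2"
  using eq1[rule_format, of p] by (simp add: L_def hirota_12_def field_simps power2_eq_square)

lemma continuity_ys: "p \<in> U \<Longrightarrow> pd2 rho p + (rho p)\<^sup>2 * pd1 u p = 0"
proof -
  assume p: "p \<in> U"
  have "pd1 u p = - pd2 (pd1 L) p"
    using p by (simp add: u_def smooth_pd_commute)
  also have "\<dots> = - pd2 (\<lambda>q. 1 - f q * h q / (g q)\<^sup>2) p"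
    using pd2_cong[OF p, of "pd1 L"] pd1_L by simp
  also have "\<dots> = pd2 (\<lambda>q. f q * h q / (g q)\<^sup>2) p"
    using p by simp
  finally show ?thesis
    using p by (simp add: rho_def field_simps power2_eq_square)
qed

lemma Dx_Dt_commute: "smooth_on2 U G \<Longrightarrow> p \<in> U \<Longrightarrow> Dt (Dx G) p = Dx (Dt G) p"
proof -
  assume "smooth_on2 U G" "p \<in> U"
  moreover have "pd2 rho p = - (rho p)\<^sup>2 * pd1 u p"
    using continuity_ys[OF \<open>p \<in> U\<close>] by simp
  ultimately show ?thesis
    using smooth_pd_commute[of G p] by (simp add: Dt_def Dx_def algebra_simps power2_eq_square)
qed

lemma Dx_u_rho: "p \<in> U \<Longrightarrow> Dx u p = - pd2 rho p / rho p"
  using continuity_ys[of p] by (simp add: Dx_def field_simps power2_eq_square)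

lemma Dx_u: "p \<in> U \<Longrightarrow> Dx u p = - (2 * L p - pd2 f p / f p - pd2 h p / h p)"
proof -
  assume p: "p \<in> U"
  have "Dx u p = - pd2 rho p / rho p"
    using p by (rule Dx_u_rho)
  also have "pd2 rho p = rho p * (2 * L p - pd2 f p / f p - pd2 h p / h p)"
    using p by (simp add: rho_def L_def field_simps power2_eq_square)
  finally show ?thesis
    using p by simp
qed

lemma Dx_Dx_u: "p \<in> U \<Longrightarrow>
  Dx (Dx u) p = - rho p * (2 * pd1 L p - pd1 (\<lambda>q. pd2 f q / f q) p - pd1 (\<lambda>q. pd2 h q / h q) p)"
proof -
  assume p: "p \<in> U"
  have "pd1 (Dx u) p = pd1 (\<lambda>q. - (2 * L q - pd2 f q / f q - pd2 h q / h q)) p"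
    by (rule pd1_cong[OF p Dx_u])
  also have "\<dots> = - (2 * pd1 L p - pd1 (\<lambda>q. pd2 f q / f q) p - pd1 (\<lambda>q. pd2 h q / h q) p)"
    using p by (simp del: pd_divide)
  finally have "pd1 (Dx u) p = - (2 * pd1 L p - pd1 (\<lambda>q. pd2 f q / f q) p - pd1 (\<lambda>q. pd2 h q / h q) p)" .
  then show ?thesis
    unfolding Dx_def[of "Dx u"] by (simp only: mult_minus_right)
qed

lemma momentum_factor: "p \<in> U \<Longrightarrow> 2 - Dx (Dx u) p = (rho p)\<^sup>2 * K p"
proof -
  assume p: "p \<in> U"
  have e2: "(1 / sqrt \<sigma>) * (pd2 f p * h p - f p * pd2 h p) + f p * h p = (g p)\<^sup>2"
    using eq2 p by (simp add: hirota_2_def)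
  have e3: "(pd1 (pd2 f) p * h p - pd1 f p * pd2 h p - pd2 f p * pd1 h p + f p * pd1 (pd2 h) p)
      + (2 / sqrt \<sigma>) * (pd2 f p * h p - f p * pd2 h p) + sqrt \<sigma> * (pd1 f p * h p - f p * pd1 h p) = 0"
    using eq3 p by (simp add: hirota_12_def hirota_2_def hirota_1_def)
  have "2 - Dx (Dx u) p = 2 + rho p * (2 * (1 - f p * h p / (g p)\<^sup>2)
      - (pd1 (pd2 f) p * f p - pd2 f p * pd1 f p) / (f p * f p)
      - (pd1 (pd2 h) p * h p - pd2 h p * pd1 h p) / (h p * h p))"
    using p by (simp add: Dx_Dx_u pd1_L)
  also have "\<dots> = (rho p)\<^sup>2 * K p"
    unfolding K_def using p sigma_pos
    by (intro momentum_identity[OF _ _ _ _ e2 e3]) (simp_all add: rho_def)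
  finally show ?thesis .
qed

lemma rho_eq: "p \<in> U \<Longrightarrow> rho p = 1 + inverse (sqrt \<sigma>) * (pd2 f p / f p - pd2 h p / h p)"
  using eq2[rule_format, of p] sigma_pos by (simp add: rho_def hirota_2_def field_simps)

lemma pd2_K: "p \<in> U \<Longrightarrow> pd2 K p = \<sigma> * pd1 rho p"
proof -
  assume p: "p \<in> U"
  define W' where "W' = pd1 (\<lambda>q. pd2 f q / f q) p - pd1 (\<lambda>q. pd2 h q / h q) p"
  have "pd2 K p = sqrt \<sigma> * (pd2 (\<lambda>q. pd1 f q / f q) p - pd2 (\<lambda>q. pd1 h q / h q) p)"
    using p by (simp add: K_def del: pd_divide)
  also have "pd2 (\<lambda>q. pd1 f q / f q) p - pd2 (\<lambda>q. pd1 h q / h q) p = W'"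
    using p by (simp add: W'_def smooth_pd_commute mult.commute)
  also have "W' = sqrt \<sigma> * pd1 rho p"
  proof -
    have "pd1 rho p = pd1 (\<lambda>q. 1 + inverse (sqrt \<sigma>) * (pd2 f q / f q - pd2 h q / h q)) p"
      by (rule pd1_cong[OF p rho_eq])
    also have "\<dots> = inverse (sqrt \<sigma>) * W'"
      using p by (simp add: W'_def del: pd_divide)
    finally show ?thesis
      using sigma_pos by simp
  qed
  finally show ?thesis
    using sigma_pos by (simp add: real_sqrt_mult[symmetric])
qed

definition "m = (\<lambda>q. 2 - Dx (Dx u) q)"

lemma smooth_m [simp]: "smooth_on2 U m"
  by (simp add: m_def)

lemma momentum_ys: "p \<in> U \<Longrightarrow> pd2 m p + 2 * m p * Dx u p - \<sigma> * (rho p)\<^sup>2 * pd1 rho p = 0"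
proof -
  assume p: "p \<in> U"
  have "pd2 m p = pd2 (\<lambda>q. (rho q)\<^sup>2 * K q) p"
    unfolding m_def by (rule pd2_cong[OF p momentum_factor])
  also have "\<dots> = 2 * rho p * pd2 rho p * K p + (rho p)\<^sup>2 * (\<sigma> * pd1 rho p)"
    using p by (simp add: pd2_K)
  finally show ?thesis
    using p by (simp add: Dx_u_rho m_def momentum_factor field_simps power2_eq_square)
qed

lemma HS_continuity_ys: "p \<in> U \<Longrightarrow> Dt rho p + Dx (\<lambda>q. rho q * u q) p = 0"
  using continuity_ys[of p] by (simp add: Dt_def Dx_def algebra_simps power2_eq_square)

lemma HS_momentum_ys:
  "p \<in> U \<Longrightarrow> Dt m p + u p * Dx m p + 2 * m p * Dx u p - \<sigma> * rho p * Dx rho p = 0"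
  using momentum_ys[of p] by (simp add: Dt_def Dx_def[of m] Dx_def[of rho] algebra_simps power2_eq_square)

lemma HS_third_ys:
  assumes p: "p \<in> U"
  shows "Dx (Dx (Dt u)) p - 4 * Dx u p + 2 * Dx u p * Dx (Dx u) p + u p * Dx (Dx (Dx u)) p
    = - \<sigma> * rho p * Dx rho p"
proof -
  have "Dx (Dx (Dt u)) p = rho p * pd1 (Dx (Dt u)) p"
    by (simp add: Dx_def[of "Dx (Dt u)"])
  also have "pd1 (Dx (Dt u)) p = pd1 (Dt (Dx u)) p"
    using Dx_Dt_commute[OF smooth_u] by (intro pd1_cong[OF p]) simp
  also have "rho p * pd1 (Dt (Dx u)) p = Dt (Dx (Dx u)) p"
    using Dx_Dt_commute[OF smooth_Dx[OF smooth_u] p] by (simp add: Dx_def[of "Dt (Dx u)"])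
  finally have "Dx (Dx (Dt u)) p + u p * Dx (Dx (Dx u)) p = - pd2 m p"
    using p by (simp add: Dt_def[of "Dx (Dx u)"] Dx_def[of "Dx (Dx u)"] m_def)
  then show ?thesis
    using momentum_ys[OF p] by (simp add: m_def Dx_def[of rho] algebra_simps power2_eq_square)
qed

definition "x = (\<lambda>p. fst p - pd2 (\<lambda>q. ln \<bar>g q\<bar>) p)"
definition "Phi = (\<lambda>p. (x p, snd p))"

lemma smooth_x [simp]: "smooth_on2 U x"
  by (rule smooth_cong[of "\<lambda>q. fst q - L q"]) (simp_all add: x_def pd2_ln_g)

lemma pd1_x: "p \<in> U \<Longrightarrow> pd1 x p = f p * h p / (g p)\<^sup>2"
  using pd1_cong[of p x "\<lambda>q. fst q - L q"] by (simp add: x_def pd2_ln_g pd1_L)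

lemma pd2_x: "p \<in> U \<Longrightarrow> pd2 x p = u p"
  using pd2_cong[of p x "\<lambda>q. fst q - L q"] by (simp add: x_def pd2_ln_g u_def)

lemma u_eq: "p \<in> U \<Longrightarrow> - pd2 (pd2 (\<lambda>q. ln \<bar>g q\<bar>)) p = u p"
  using pd2_cong[of p "pd2 (\<lambda>q. ln \<bar>g q\<bar>)" L] by (simp add: pd2_ln_g u_def)

lemma Phi_locally_invertible:
  "p \<in> U \<Longrightarrow> \<exists>V. p \<in> V \<and> open V \<and> V \<subseteq> U \<and> inj_on Phi V \<and> open (Phi ` V)"
  unfolding Phi_def
  by (intro shear_locally_injective_open open_domain differentiable_imp_continuous_within)
    (simp_all add: pd1_x)

end

locale HS_local_inverse = HS_bilinear +
  fixes V :: "(real \<times> real) set" and \<Psi> :: "real \<times> real \<Rightarrow> real \<times> real"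
  assumes V_subset: "V \<subseteq> U" and V_open: "open V" and image_open: "open (Phi ` V)"
    and left_inverse: "\<And>p. p \<in> V \<Longrightarrow> \<Psi> (Phi p) = p"
    and right_inverse: "\<And>q. q \<in> Phi ` V \<Longrightarrow> Phi (\<Psi> q) = q"
    and \<Psi>_differentiable: "\<And>q. q \<in> Phi ` V \<Longrightarrow> \<Psi> differentiable (at q)"
begin

lemma \<Psi>_in_V: "q \<in> Phi ` V \<Longrightarrow> \<Psi> q \<in> V"
  using left_inverse by auto

lemma pd_transport:
  assumes G: "smooth_on2 U G" and q: "q \<in> Phi ` V"
    and F: "\<And>q'. q' \<in> Phi ` V \<Longrightarrow> F q' = G (\<Psi> q')"
  shows pd1_transport: "pd1 F q = Dx G (\<Psi> q)"
    and pd2_transport: "pd2 F q = Dt G (\<Psi> q)"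
proof -
  define p where "p = \<Psi> q"
  have p: "p \<in> V" "p \<in> U" and q_eq: "(x p, snd p) = q"
    using \<Psi>_in_V[OF q] V_subset right_inverse[OF q] by (auto simp: p_def Phi_def)
  have inv: "\<Psi> (x p', snd p') = p'" if "p' \<in> V" for p'
    using left_inverse[OF that] by (simp add: Phi_def)
  have diff: "x differentiable (at p)" "\<Psi> differentiable (at (x p, snd p))" "G differentiable (at p)"
    using p(2) G \<Psi>_differentiable[OF q] by (simp_all add: q_eq)
  define D1 where "D1 = pd1 (\<lambda>q. G (\<Psi> q)) q"
  define D2 where "D2 = pd2 (\<lambda>q. G (\<Psi> q)) q"
  have "pd1 G p = D1 * pd1 x p" "pd2 G p = D1 * pd2 x p + D2"
    using pd_inverse_change_of_variables[OF V_open p(1) diff(1) inv diff(2,3)]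
    unfolding D1_def D2_def q_eq by simp_all
  moreover have "rho p * pd1 x p = 1" "pd2 x p = u p"
    using p(2) by (simp_all add: pd1_x pd2_x rho_def)
  moreover have "pd1 F q = D1" "pd2 F q = D2"
    unfolding D1_def D2_def using pd_cong_open[OF image_open q F] by simp_all
  ultimately show "pd1 F q = Dx G (\<Psi> q)" "pd2 F q = Dt G (\<Psi> q)"
    unfolding Dx_def Dt_def p_def[symmetric] by (simp_all add: algebra_simps)
qed

lemma HS_system:
  assumes q: "q \<in> Phi ` V"
    and uu: "\<And>q. q \<in> Phi ` V \<Longrightarrow> uu q = u (\<Psi> q)"
    and rr: "\<And>q. q \<in> Phi ` V \<Longrightarrow> rr q = rho (\<Psi> q)"
  defines "mm \<equiv> \<lambda>q. 2 - pd1 (pd1 uu) q"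
  shows "pd2 rr q + pd1 (\<lambda>q'. rr q' * uu q') q = 0"
    and "pd2 mm q + uu q * pd1 mm q + 2 * mm q * pd1 uu q - \<sigma> * rr q * pd1 rr q = 0"
    and "pd1 (pd1 (pd2 uu)) q - 4 * pd1 uu q + 2 * pd1 uu q * pd1 (pd1 uu) q
      + uu q * pd1 (pd1 (pd1 uu)) q = - \<sigma> * rr q * pd1 rr q"
proof -
  let ?W = "Phi ` V"
  have p: "\<Psi> q \<in> U"
    using \<Psi>_in_V[OF q] V_subset by blast
  have uu1: "pd1 uu q' = Dx u (\<Psi> q')" if "q' \<in> ?W" for q'
    by (rule pd1_transport[OF smooth_u that uu])
  have uu11: "pd1 (pd1 uu) q' = Dx (Dx u) (\<Psi> q')" if "q' \<in> ?W" for q'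
    by (rule pd1_transport[OF smooth_Dx[OF smooth_u] that uu1])
  have uu2: "pd2 uu q' = Dt u (\<Psi> q')" if "q' \<in> ?W" for q'
    by (rule pd2_transport[OF smooth_u that uu])
  have uu21: "pd1 (pd2 uu) q' = Dx (Dt u) (\<Psi> q')" if "q' \<in> ?W" for q'
    by (rule pd1_transport[OF smooth_Dt[OF smooth_u] that uu2])
  have mm: "mm q' = m (\<Psi> q')" if "q' \<in> ?W" for q'
    using uu11[OF that] by (simp add: mm_def m_def)
  have rr_uu: "rr q' * uu q' = rho (\<Psi> q') * u (\<Psi> q')" if "q' \<in> ?W" for q'
    using rr[OF that] uu[OF that] by simp
  note transport = pd1_transport[OF _ q] pd2_transport[OF _ q]
  show "pd2 rr q + pd1 (\<lambda>q'. rr q' * uu q') q = 0"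
    using HS_continuity_ys[OF p] transport[of rho rr] transport[of "\<lambda>p. rho p * u p"] rr rr_uu
    by simp
  show "pd2 mm q + uu q * pd1 mm q + 2 * mm q * pd1 uu q - \<sigma> * rr q * pd1 rr q = 0"
    using HS_momentum_ys[OF p] transport[of m mm] transport[of rho rr] mm uu uu1 rr q by simp
  show "pd1 (pd1 (pd2 uu)) q - 4 * pd1 uu q + 2 * pd1 uu q * pd1 (pd1 uu) q
      + uu q * pd1 (pd1 (pd1 uu)) q = - \<sigma> * rr q * pd1 rr q"
    using HS_third_ys[OF p] transport[of "Dx (Dt u)" "pd1 (pd2 uu)"]
      transport[of "Dx (Dx u)" "pd1 (pd1 uu)"] transport[of rho rr] uu21 uu11 uu uu1 rr q
    by simp
qed

end

context HS_bilinear
begin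

lemma HS_system_new_variables:
  assumes "V \<subseteq> U" "open V" "open (Phi ` V)" "\<forall>p\<in>V. \<Psi> (Phi p) = p" "\<forall>q\<in>Phi ` V. Phi (\<Psi> q) = q"
    and \<Psi>: "smooth_on2 (Phi ` V) (\<lambda>q. fst (\<Psi> q))" "smooth_on2 (Phi ` V) (\<lambda>q. snd (\<Psi> q))"
  shows "let uu = (\<lambda>q. - pd2 (pd2 (\<lambda>q. ln \<bar>g q\<bar>)) (\<Psi> q)); rr = (\<lambda>q. rho (\<Psi> q));
      m = (\<lambda>q. 2 - pd1 (pd1 uu) q)
    in \<forall>q\<in>Phi ` V. pd2 rr q + pd1 (\<lambda>q'. rr q' * uu q') q = 0
      \<and> pd2 m q + uu q * pd1 m q + 2 * m q * pd1 uu q - \<sigma> * rr q * pd1 rr q = 0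
      \<and> pd1 (pd1 (pd2 uu)) q - 4 * pd1 uu q + 2 * pd1 uu q * pd1 (pd1 uu) q
        + uu q * pd1 (pd1 (pd1 uu)) q = - \<sigma> * rr q * pd1 rr q"
proof -
  have "\<Psi> differentiable (at q)" if "q \<in> Phi ` V" for q
    using differentiable_Pair[OF \<Psi>[THEN smooth_on2_differentiable, OF that]] by simp
  with assms interpret HS_local_inverse U \<sigma> f g h V \<Psi>
    by unfold_locales auto
  have "- pd2 (pd2 (\<lambda>q. ln \<bar>g q\<bar>)) (\<Psi> q) = u (\<Psi> q)" if "q \<in> Phi ` V" for q
    using \<Psi>_in_V[OF that] V_subset by (intro u_eq) blast
  then show ?thesis
    unfolding Let_def by (intro ballI conjI HS_system) simp_all
qed

end

theorem theorem1:
  fixes \<sigma> :: real and U :: "(real \<times> real) set" and f g h :: "real \<times> real \<Rightarrow> real"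
  assumes sigma_pos: "\<sigma> > 0"
    and U_open: "open U"
    and smooth: "smooth_on2 U f" "smooth_on2 U g" "smooth_on2 U h"
    and nonzero: "\<forall>p\<in>U. f p \<noteq> 0 \<and> g p \<noteq> 0 \<and> h p \<noteq> 0"
    and eq1: "\<forall>p\<in>U. (1/2) * hirota_12 g g p - g p * g p = - (f p * h p)"
    and eq2: "\<forall>p\<in>U. (1 / sqrt \<sigma>) * hirota_2 f h p + f p * h p = (g p)\<^sup>2"
    and eq3: "\<forall>p\<in>U. hirota_12 f h p + (2 / sqrt \<sigma>) * hirota_2 f h p
                      + sqrt \<sigma> * hirota_1 f h p = 0"
  defines "x \<equiv> (\<lambda>p. fst p - pd2 (\<lambda>q. ln \<bar>g q\<bar>) p)"
    and "\<Phi> \<equiv> (\<lambda>p. (fst p - pd2 (\<lambda>q. ln \<bar>g q\<bar>) p, snd p))"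
    and "u \<equiv> (\<lambda>p. - pd2 (pd2 (\<lambda>q. ln \<bar>g q\<bar>)) p)"
    and "\<rho> \<equiv> (\<lambda>p. (g p)\<^sup>2 / (f p * h p))"
  shows "(\<forall>p\<in>U. pd1 x p = f p * h p / (g p)\<^sup>2 \<and> pd1 x p = 1 / \<rho> p \<and> pd1 x p \<noteq> 0
                 \<and> pd2 x p = u p)
       \<and> (\<forall>p\<in>U. \<exists>V. p \<in> V \<and> open V \<and> V \<subseteq> U \<and> inj_on \<Phi> V \<and> open (\<Phi> ` V))
       \<and> (\<forall>V \<Psi>. V \<subseteq> U \<longrightarrow> open V \<longrightarrow> open (\<Phi> ` V)
              \<longrightarrow> (\<forall>p\<in>V. \<Psi> (\<Phi> p) = p) \<longrightarrow> (\<forall>q\<in>\<Phi> ` V. \<Phi> (\<Psi> q) = q)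
              \<longrightarrow> smooth_on2 (\<Phi> ` V) (\<lambda>q. fst (\<Psi> q))
              \<longrightarrow> smooth_on2 (\<Phi> ` V) (\<lambda>q. snd (\<Psi> q))
              \<longrightarrow> (let uu = (\<lambda>q. u (\<Psi> q)); rr = (\<lambda>q. \<rho> (\<Psi> q));
                       m = (\<lambda>q. 2 - pd1 (pd1 uu) q)
                   in \<forall>q\<in>\<Phi> ` V.
                        pd2 rr q + pd1 (\<lambda>q'. rr q' * uu q') q = 0
                      \<and> pd2 m q + uu q * pd1 m q + 2 * m q * pd1 uu q - \<sigma> * rr q * pd1 rr q = 0
                      \<and> pd1 (pd1 (pd2 uu)) q - 4 * pd1 uu q + 2 * pd1 uu q * pd1 (pd1 uu) q
                          + uu q * pd1 (pd1 (pd1 uu)) q = - \<sigma> * rr q * pd1 rr q))"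
proof -
  interpret H: HS_bilinear U \<sigma> f g h
    using assms by unfold_locales auto
  have H: "H.x = x" "H.Phi = \<Phi>" "H.rho = \<rho>"
    by (simp_all add: x_def \<Phi>_def \<rho>_def H.x_def H.Phi_def H.rho_def)
  have "\<forall>p\<in>U. pd1 x p = f p * h p / (g p)\<^sup>2 \<and> pd1 x p = 1 / \<rho> p \<and> pd1 x p \<noteq> 0 \<and> pd2 x p = u p"
    using H.pd1_x H.pd2_x H.u_eq by (simp add: H u_def \<rho>_def)
  moreover have "\<forall>p\<in>U. \<exists>V. p \<in> V \<and> open V \<and> V \<subseteq> U \<and> inj_on \<Phi> V \<and> open (\<Phi> ` V)"
    using H.Phi_locally_invertible by (simp add: H)
  ultimately show ?thesis
    using H.HS_system_new_variables unfolding H u_def by blast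
qed

end
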